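(* Let $\mathcal{A},\mathcal{C}$ be small categories and $\Gamma,P:\mathcal{A}^{op}\times\mathcal{A}\times\mathcal{C}^{op}\times\mathcal{C}\to\mathbf{Set}$ functors. Let $S_1$ be the set of dinatural transformations, dinatural in $(z,x)\in\mathcal{A}\times\mathcal{C}$, from $(z',z,x',x)\mapsto\Gamma(z',z,x',x)$ to $(z',z,x',x)\mapsto P(z',z,x',x)$ (components $h_{z,x}:\Gamma(z,z,x,x)\to P(z,z,x,x)$), and let $S_2$ be the set of dinatural transformations, dinatural in $(a,b,x)\in\mathcal{A}^{op}\times\mathcal{A}\times\mathcal{C}$, from $(a',b',x',a,b,x)\mapsto\hom_{\mathcal{A}}(a,b)\times\Gamma(b',a',x',x)$ to $(a',b',x',a,b,x)\mapsto P(a,b,x',x)$ (components $\alpha_{a,b,x}:\hom_{\mathcal{A}}(a,b)\times\Gamma(b,a,x,x)\to P(a,b,x,x)$). Then there is a bijection $J:S_1\to S_2$, natural in $\Gamma$ and $P$, such that $J(h)_{z,z,x}(\mathrm{id}_z,k)=h_{z,x}(k)$ for all $z\in\mathcal{A}$, $x\in\mathcal{C}$, $k\in\Gamma(z,z,x,x)$; its inverse sends $\alpha\in S_2$ to the family $k\mapsto\alpha_{z,z,x}(\mathrm{id}_z,k)$.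
   Context: For difunctors $F,G:\mathcal{B}^{op}\times\mathcal{B}\to\mathcal{D}$, a dinatural transformation $\alpha:F\Rightarrow G$ is a family $\alpha_x:F(x,x)\to G(x,x)$, $x\in\mathcal{B}$, such that for every $f:a\to b$: $G(f,\mathrm{id}_b)\circ\alpha_b\circ F(\mathrm{id}_b,f)=G(\mathrm{id}_a,f)\circ\alpha_a\circ F(f,\mathrm{id}_a)$. When $\mathcal{B}$ is a product of categories, the arguments of functors $\mathcal{B}^{op}\times\mathcal{B}\to\mathbf{Set}$ are reordered freely, and dinaturality is with respect to objects of the product category. In $(a',b',x',a,b,x)$ the primed arguments are the contravariant ones ($a'\in\mathcal{A}$, $b'\in\mathcal{A}^{op}$, $x'\in\mathcal{C}^{op}$). *)

theory Defs
  imports Main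
begin

record ('o, 'm) cat =
  Ob   :: "'o set"
  Ar   :: "'m set"
  Dom  :: "'m \<Rightarrow> 'o"
  Cod  :: "'m \<Rightarrow> 'o"
  Idm  :: "'o \<Rightarrow> 'm"
  Comp :: "'m \<Rightarrow> 'm \<Rightarrow> 'm"   (* Comp g f = g \<circ> f *)

definition category :: "('o, 'm) cat \<Rightarrow> bool" where
  "category C \<longleftrightarrow>
     (\<forall>f\<in>Ar C. Dom C f \<in> Ob C \<and> Cod C f \<in> Ob C) \<and>
     (\<forall>a\<in>Ob C. Idm C a \<in> Ar C \<and> Dom C (Idm C a) = a \<and> Cod C (Idm C a) = a) \<and>
     (\<forall>f\<in>Ar C. \<forall>g\<in>Ar C. Cod C f = Dom C g \<longrightarrow>
        Comp C g f \<in> Ar C \<and> Dom C (Comp C g f) = Dom C f \<and> Cod C (Comp C g f) = Cod C g) \<and>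
     (\<forall>f\<in>Ar C. Comp C (Idm C (Cod C f)) f = f \<and> Comp C f (Idm C (Dom C f)) = f) \<and>
     (\<forall>f\<in>Ar C. \<forall>g\<in>Ar C. \<forall>h\<in>Ar C. Cod C f = Dom C g \<longrightarrow> Cod C g = Dom C h \<longrightarrow>
        Comp C h (Comp C g f) = Comp C (Comp C h g) f)"

definition hom :: "('o, 'm) cat \<Rightarrow> 'o \<Rightarrow> 'o \<Rightarrow> 'm set" where
  "hom C a b = {f \<in> Ar C. Dom C f = a \<and> Cod C f = b}"

definition op_cat :: "('o, 'm) cat \<Rightarrow> ('o, 'm) cat" where
  "op_cat C = \<lparr> Ob = Ob C, Ar = Ar C, Dom = Cod C, Cod = Dom C, Idm = Idm C,
                Comp = (\<lambda>g f. Comp C f g) \<rparr>"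

definition prod_cat :: "('o1, 'm1) cat \<Rightarrow> ('o2, 'm2) cat \<Rightarrow> ('o1 \<times> 'o2, 'm1 \<times> 'm2) cat" where
  "prod_cat C D = \<lparr> Ob = Ob C \<times> Ob D, Ar = Ar C \<times> Ar D,
       Dom = (\<lambda>(f, g). (Dom C f, Dom D g)), Cod = (\<lambda>(f, g). (Cod C f, Cod D g)),
       Idm = (\<lambda>(a, b). (Idm C a, Idm D b)),
       Comp = (\<lambda>(f', g') (f, g). (Comp C f' f, Comp D g' g)) \<rparr>"

text \<open>A difunctor is given by its object part Fo x' x (a set of values) and its
  arrow part Fm f g : F(cod f, dom g) \<rightarrow> F(dom f, cod g), f contravariant, g covariant.\<close>

definition difunctor :: "('o, 'm) cat \<Rightarrow> ('o \<Rightarrow> 'o \<Rightarrow> 'v set) \<Rightarrow> ('m \<Rightarrow> 'm \<Rightarrow> 'v \<Rightarrow> 'v) \<Rightarrow> bool" where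
  "difunctor B Fo Fm \<longleftrightarrow>
     (\<forall>f\<in>Ar B. \<forall>g\<in>Ar B. \<forall>u\<in>Fo (Cod B f) (Dom B g). Fm f g u \<in> Fo (Dom B f) (Cod B g)) \<and>
     (\<forall>x'\<in>Ob B. \<forall>x\<in>Ob B. \<forall>u\<in>Fo x' x. Fm (Idm B x') (Idm B x) u = u) \<and>
     (\<forall>f\<in>Ar B. \<forall>f'\<in>Ar B. \<forall>g\<in>Ar B. \<forall>g'\<in>Ar B.
        Cod B f = Dom B f' \<longrightarrow> Cod B g = Dom B g' \<longrightarrow>
        (\<forall>u\<in>Fo (Cod B f') (Dom B g).
           Fm (Comp B f' f) (Comp B g' g) u = Fm f g' (Fm f' g u)))"

text \<open>Dinatural transformations F \<Rightarrow> G, as extensional families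
  (components are undefined off the objects / off their domain).\<close>

definition dinat :: "('o, 'm) cat \<Rightarrow> ('o \<Rightarrow> 'o \<Rightarrow> 'v set) \<Rightarrow> ('m \<Rightarrow> 'm \<Rightarrow> 'v \<Rightarrow> 'v)
     \<Rightarrow> ('o \<Rightarrow> 'o \<Rightarrow> 'w set) \<Rightarrow> ('m \<Rightarrow> 'm \<Rightarrow> 'w \<Rightarrow> 'w) \<Rightarrow> ('o \<Rightarrow> 'v \<Rightarrow> 'w) set" where
  "dinat B Fo Fm Go Gm = {\<alpha>.
     (\<forall>x\<in>Ob B. \<forall>u\<in>Fo x x. \<alpha> x u \<in> Go x x) \<and>
     (\<forall>x. x \<notin> Ob B \<longrightarrow> \<alpha> x = (\<lambda>_. undefined)) \<and>
     (\<forall>x\<in>Ob B. \<forall>u. u \<notin> Fo x x \<longrightarrow> \<alpha> x u = undefined) \<and>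
     (\<forall>f\<in>Ar B. \<forall>u\<in>Fo (Cod B f) (Dom B f).
        Gm f (Idm B (Cod B f)) (\<alpha> (Cod B f) (Fm (Idm B (Cod B f)) f u)) =
        Gm (Idm B (Dom B f)) f (\<alpha> (Dom B f) (Fm f (Idm B (Dom B f)) u)))}"

definition nat_trans :: "('o, 'm) cat \<Rightarrow> ('o \<Rightarrow> 'o \<Rightarrow> 'v set) \<Rightarrow> ('m \<Rightarrow> 'm \<Rightarrow> 'v \<Rightarrow> 'v)
     \<Rightarrow> ('o \<Rightarrow> 'o \<Rightarrow> 'w set) \<Rightarrow> ('m \<Rightarrow> 'm \<Rightarrow> 'w \<Rightarrow> 'w) \<Rightarrow> ('o \<Rightarrow> 'o \<Rightarrow> 'v \<Rightarrow> 'w) \<Rightarrow> bool" where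
  "nat_trans B Fo Fm Go Gm \<theta> \<longleftrightarrow>
     (\<forall>x'\<in>Ob B. \<forall>x\<in>Ob B. \<forall>u\<in>Fo x' x. \<theta> x' x u \<in> Go x' x) \<and>
     (\<forall>f\<in>Ar B. \<forall>g\<in>Ar B. \<forall>u\<in>Fo (Cod B f) (Dom B g).
        Gm f g (\<theta> (Cod B f) (Dom B g) u) = \<theta> (Dom B f) (Cod B g) (Fm f g u))"

definition whisker :: "('o, 'm) cat \<Rightarrow> ('o \<Rightarrow> 'o \<Rightarrow> 'v' set) \<Rightarrow> ('o \<Rightarrow> 'o \<Rightarrow> 'v' \<Rightarrow> 'v)
     \<Rightarrow> ('o \<Rightarrow> 'o \<Rightarrow> 'w \<Rightarrow> 'w') \<Rightarrow> ('o \<Rightarrow> 'v \<Rightarrow> 'w) \<Rightarrow> ('o \<Rightarrow> 'v' \<Rightarrow> 'w')" where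
  "whisker B F'o \<theta> \<psi> \<alpha> = (\<lambda>x. if x \<in> Ob B
      then (\<lambda>u. if u \<in> F'o x x then \<psi> x x (\<alpha> x (\<theta> x x u)) else undefined)
      else (\<lambda>_. undefined))"

text \<open>B1 = A \<times> C; a functor A^op \<times> A \<times> C^op \<times> C \<rightarrow> Set is a difunctor on B1:
  Go (z',x') (z,x) = \<Gamma>(z',z,x',x).\<close>

abbreviation B1 :: "('a, 'ma) cat \<Rightarrow> ('c, 'mc) cat \<Rightarrow> ('a \<times> 'c, 'ma \<times> 'mc) cat" where
  "B1 A C \<equiv> prod_cat A C"

abbreviation B2 :: "('a, 'ma) cat \<Rightarrow> ('c, 'mc) cat \<Rightarrow> ('a \<times> ('a \<times> 'c), 'ma \<times> ('ma \<times> 'mc)) cat" where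
  "B2 A C \<equiv> prod_cat (op_cat A) (prod_cat A C)"

text \<open>Source of S2: (a',b',x',a,b,x) \<mapsto> hom_A(a,b) \<times> \<Gamma>(b',a',x',x).\<close>

definition src2o :: "('a, 'ma) cat \<Rightarrow> ('a \<times> 'c \<Rightarrow> 'a \<times> 'c \<Rightarrow> 'v set)
     \<Rightarrow> 'a \<times> ('a \<times> 'c) \<Rightarrow> 'a \<times> ('a \<times> 'c) \<Rightarrow> ('ma \<times> 'v) set" where
  "src2o A Go = (\<lambda>(a', b', x') (a, b, x). hom A a b \<times> Go (b', x') (a', x))"

definition src2m :: "('a, 'ma) cat \<Rightarrow> ('ma \<times> 'mc \<Rightarrow> 'ma \<times> 'mc \<Rightarrow> 'v \<Rightarrow> 'v)
     \<Rightarrow> 'ma \<times> ('ma \<times> 'mc) \<Rightarrow> 'ma \<times> ('ma \<times> 'mc) \<Rightarrow> 'ma \<times> 'v \<Rightarrow> 'ma \<times> 'v" where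
  "src2m A Gm = (\<lambda>(f1, f2, f3) (g1, g2, g3) (m, k).
      (Comp A g2 (Comp A m g1), Gm (f2, f3) (f1, g3) k))"

text \<open>Target of S2: (a',b',x',a,b,x) \<mapsto> P(a,b,x',x).\<close>

definition tgt2o :: "('a \<times> 'c \<Rightarrow> 'a \<times> 'c \<Rightarrow> 'w set) \<Rightarrow> 'a \<times> ('a \<times> 'c) \<Rightarrow> 'a \<times> ('a \<times> 'c) \<Rightarrow> 'w set" where
  "tgt2o Po = (\<lambda>(a', b', x') (a, b, x). Po (a, x') (b, x))"

definition tgt2m :: "('ma \<times> 'mc \<Rightarrow> 'ma \<times> 'mc \<Rightarrow> 'w \<Rightarrow> 'w)
     \<Rightarrow> 'ma \<times> ('ma \<times> 'mc) \<Rightarrow> 'ma \<times> ('ma \<times> 'mc) \<Rightarrow> 'w \<Rightarrow> 'w" where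
  "tgt2m Pm = (\<lambda>(f1, f2, f3) (g1, g2, g3). Pm (g1, f3) (g2, g3))"

definition src2nt :: "('a \<times> 'c \<Rightarrow> 'a \<times> 'c \<Rightarrow> 'v' \<Rightarrow> 'v)
     \<Rightarrow> 'a \<times> ('a \<times> 'c) \<Rightarrow> 'a \<times> ('a \<times> 'c) \<Rightarrow> 'ma \<times> 'v' \<Rightarrow> 'ma \<times> 'v" where
  "src2nt \<theta> = (\<lambda>(a', b', x') (a, b, x) (m, k). (m, \<theta> (b', x') (a', x) k))"

definition tgt2nt :: "('a \<times> 'c \<Rightarrow> 'a \<times> 'c \<Rightarrow> 'w \<Rightarrow> 'w')
     \<Rightarrow> 'a \<times> ('a \<times> 'c) \<Rightarrow> 'a \<times> ('a \<times> 'c) \<Rightarrow> 'w \<Rightarrow> 'w'" where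
  "tgt2nt \<psi> = (\<lambda>(a', b', x') (a, b, x). \<psi> (a, x') (b, x))"

end

theory Submission
  imports Defs
begin

text \<open>A dinatural \<open>h : \<Gamma> \<Rightarrow> P\<close> on \<open>\<A> \<times> \<C>\<close> extends from objects to arrows: for \<open>f : c \<rightarrow> d\<close> the
  two legs of the dinaturality hexagon at \<open>f\<close> are one map \<open>h\<^sub>f : \<Gamma>(d,c) \<rightarrow> P(c,d)\<close>, with
  \<open>h\<^bsub>id\<^esub> = h\<close> and \<open>P(\<phi>,\<chi>) \<circ> h\<^sub>\<psi> \<circ> \<Gamma>(\<chi>,\<phi>) = h\<^bsub>\<chi>\<psi>\<phi>\<^esub>\<close>. Setting \<open>J(h)\<^bsub>a,b,x\<^esub>(m,k) = h\<^bsub>(m,id)\<^esub>(k)\<close>,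
  this last identity is exactly the dinaturality of \<open>J(h)\<close> in \<open>(a,b,x)\<close>. Conversely, dinaturality
  of \<open>\<alpha>\<close> at \<open>(id,m,id)\<close> shows that \<open>\<alpha>\<close> is determined by its values at identities, i.e.
  \<open>J\<close> inverts restriction to identities. Naturality in \<open>\<Gamma>\<close> and \<open>P\<close> holds because \<open>h\<^sub>f\<close>
  commutes with whiskering.\<close>

lemma prod_cat_simps [simp]:
  "Ob (prod_cat C D) = Ob C \<times> Ob D"
  "Ar (prod_cat C D) = Ar C \<times> Ar D"
  "Dom (prod_cat C D) (f, g) = (Dom C f, Dom D g)"
  "Cod (prod_cat C D) (f, g) = (Cod C f, Cod D g)"
  "Idm (prod_cat C D) (a, b) = (Idm C a, Idm D b)"
  "Comp (prod_cat C D) (f', g') (f, g) = (Comp C f' f, Comp D g' g)"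
  by (simp_all add: prod_cat_def)

lemma op_cat_simps [simp]:
  "Ob (op_cat C) = Ob C" "Ar (op_cat C) = Ar C" "Dom (op_cat C) = Cod C"
  "Cod (op_cat C) = Dom C" "Idm (op_cat C) = Idm C" "Comp (op_cat C) g f = Comp C f g"
  by (simp_all add: op_cat_def)

lemma mem_hom_iff [simp]: "f \<in> hom C a b \<longleftrightarrow> f \<in> Ar C \<and> Dom C f = a \<and> Cod C f = b"
  by (simp add: hom_def)

context
  fixes B :: "('o, 'm) cat"
  assumes cat: "category B"
begin

lemma Dom_in_Ob [simp]: "f \<in> Ar B \<Longrightarrow> Dom B f \<in> Ob B"
  and Cod_in_Ob [simp]: "f \<in> Ar B \<Longrightarrow> Cod B f \<in> Ob B"
  and Idm_in_Ar [simp]: "a \<in> Ob B \<Longrightarrow> Idm B a \<in> Ar B"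
  and Dom_Idm [simp]: "a \<in> Ob B \<Longrightarrow> Dom B (Idm B a) = a"
  and Cod_Idm [simp]: "a \<in> Ob B \<Longrightarrow> Cod B (Idm B a) = a"
  using cat by (simp_all add: category_def)

lemma Comp_in_Ar [simp]: "f \<in> Ar B \<Longrightarrow> g \<in> Ar B \<Longrightarrow> Cod B f = Dom B g \<Longrightarrow> Comp B g f \<in> Ar B"
  and Dom_Comp [simp]: "f \<in> Ar B \<Longrightarrow> g \<in> Ar B \<Longrightarrow> Cod B f = Dom B g \<Longrightarrow> Dom B (Comp B g f) = Dom B f"
  and Cod_Comp [simp]: "f \<in> Ar B \<Longrightarrow> g \<in> Ar B \<Longrightarrow> Cod B f = Dom B g \<Longrightarrow> Cod B (Comp B g f) = Cod B g"
  using cat by (simp_all add: category_def)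

lemma Comp_Idm_left [simp]: "f \<in> Ar B \<Longrightarrow> Cod B f = b \<Longrightarrow> Comp B (Idm B b) f = f"
  and Comp_Idm_right [simp]: "f \<in> Ar B \<Longrightarrow> Dom B f = a \<Longrightarrow> Comp B f (Idm B a) = f"
  using cat by (auto simp: category_def)

lemma Comp_assoc:
  "f \<in> Ar B \<Longrightarrow> g \<in> Ar B \<Longrightarrow> h \<in> Ar B \<Longrightarrow> Cod B f = Dom B g \<Longrightarrow> Cod B g = Dom B h \<Longrightarrow>
   Comp B h (Comp B g f) = Comp B (Comp B h g) f"
  using cat by (simp add: category_def)

end

lemma category_prod_cat: "category A \<Longrightarrow> category C \<Longrightarrow> category (prod_cat A C)"
  unfolding category_def[of "prod_cat A C"] by (auto simp: Comp_assoc)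

lemma category_op_cat: "category A \<Longrightarrow> category (op_cat A)"
  unfolding category_def[of "op_cat A"] by (auto simp: Comp_assoc)

context
  fixes B :: "('o, 'm) cat" and Fo Fm
  assumes difunctor: "difunctor B Fo Fm"
begin

lemma difunctor_closed:
  "f \<in> Ar B \<Longrightarrow> g \<in> Ar B \<Longrightarrow> u \<in> Fo (Cod B f) (Dom B g) \<Longrightarrow> Dom B f = x' \<Longrightarrow> Cod B g = x \<Longrightarrow>
   Fm f g u \<in> Fo x' x"
  using difunctor by (auto simp: difunctor_def)

lemma difunctor_Idm:
  "x' \<in> Ob B \<Longrightarrow> x \<in> Ob B \<Longrightarrow> u \<in> Fo x' x \<Longrightarrow> Fm (Idm B x') (Idm B x) u = u"
  using difunctor by (simp add: difunctor_def)

lemma difunctor_Comp: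
  "f \<in> Ar B \<Longrightarrow> f' \<in> Ar B \<Longrightarrow> g \<in> Ar B \<Longrightarrow> g' \<in> Ar B \<Longrightarrow>
   Cod B f = Dom B f' \<Longrightarrow> Cod B g = Dom B g' \<Longrightarrow> u \<in> Fo (Cod B f') (Dom B g) \<Longrightarrow>
   Fm f g' (Fm f' g u) = Fm (Comp B f' f) (Comp B g' g) u"
  using difunctor unfolding difunctor_def by metis

end

lemma difunctor_prod_cat_Idm:
  assumes "difunctor (prod_cat A C) Fo Fm" "a' \<in> Ob A" "x' \<in> Ob C" "a \<in> Ob A" "x \<in> Ob C"
    "u \<in> Fo (a', x') (a, x)"
  shows "Fm (Idm A a', Idm C x') (Idm A a, Idm C x) u = u"
  using difunctor_Idm[OF assms(1), of "(a', x')" "(a, x)"] assms by simp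

lemma difunctor_src2:
  assumes cA: "category A" and cC: "category C" and G: "difunctor (B1 A C) Go Gm"
  shows "difunctor (B2 A C) (src2o A Go) (src2m A Gm)"
  unfolding difunctor_def using cA cC
  by (auto simp: src2o_def src2m_def Comp_assoc difunctor_closed[OF G] difunctor_prod_cat_Idm[OF G]
      difunctor_Comp[OF G])

lemma dinat_closed:
  "\<alpha> \<in> dinat B Fo Fm Go Gm \<Longrightarrow> x \<in> Ob B \<Longrightarrow> u \<in> Fo x x \<Longrightarrow> \<alpha> x u \<in> Go x x"
  by (simp add: dinat_def)

lemma dinat_square:
  "\<alpha> \<in> dinat B Fo Fm Go Gm \<Longrightarrow> f \<in> Ar B \<Longrightarrow> u \<in> Fo (Cod B f) (Dom B f) \<Longrightarrow>
   Gm f (Idm B (Cod B f)) (\<alpha> (Cod B f) (Fm (Idm B (Cod B f)) f u)) =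
   Gm (Idm B (Dom B f)) f (\<alpha> (Dom B f) (Fm f (Idm B (Dom B f)) u))"
  by (simp add: dinat_def)

lemma nat_trans_closed:
  "nat_trans B Fo Fm Go Gm \<theta> \<Longrightarrow> x' \<in> Ob B \<Longrightarrow> x \<in> Ob B \<Longrightarrow> u \<in> Fo x' x \<Longrightarrow> \<theta> x' x u \<in> Go x' x"
  by (simp add: nat_trans_def)

lemma nat_trans_natural:
  "nat_trans B Fo Fm Go Gm \<theta> \<Longrightarrow> f \<in> Ar B \<Longrightarrow> g \<in> Ar B \<Longrightarrow> u \<in> Fo (Cod B f) (Dom B g) \<Longrightarrow>
   Gm f g (\<theta> (Cod B f) (Dom B g) u) = \<theta> (Dom B f) (Cod B g) (Fm f g u)"
  by (simp add: nat_trans_def)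

definition diag_restrict :: "('o, 'm) cat \<Rightarrow> ('o \<Rightarrow> 'o \<Rightarrow> 'v set) \<Rightarrow> ('o \<Rightarrow> 'v \<Rightarrow> 'w) \<Rightarrow> 'o \<Rightarrow> 'v \<Rightarrow> 'w"
  where "diag_restrict B Fo \<phi> = (\<lambda>x. if x \<in> Ob B
     then (\<lambda>u. if u \<in> Fo x x then \<phi> x u else undefined) else (\<lambda>_. undefined))"

lemma diag_restrict_apply [simp]: "x \<in> Ob B \<Longrightarrow> u \<in> Fo x x \<Longrightarrow> diag_restrict B Fo \<phi> x u = \<phi> x u"
  by (simp add: diag_restrict_def)

lemma diag_restrict_cong:
  "(\<And>x u. x \<in> Ob B \<Longrightarrow> u \<in> Fo x x \<Longrightarrow> \<phi> x u = \<psi> x u) \<Longrightarrow> diag_restrict B Fo \<phi> = diag_restrict B Fo \<psi>"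
  by (simp add: diag_restrict_def fun_eq_iff)

lemma diag_restrict_dinat: "\<alpha> \<in> dinat B Fo Fm Go Gm \<Longrightarrow> diag_restrict B Fo \<alpha> = \<alpha>"
  by (auto simp: diag_restrict_def dinat_def fun_eq_iff)

lemma whisker_eq_diag_restrict:
  "whisker B F'o \<theta> \<psi> \<alpha> = diag_restrict B F'o (\<lambda>x u. \<psi> x x (\<alpha> x (\<theta> x x u)))"
  by (simp add: whisker_def diag_restrict_def)

lemma diag_restrict_dinatI:
  assumes cat: "category B" and F: "difunctor B Fo Fm"
    and closed: "\<And>x u. x \<in> Ob B \<Longrightarrow> u \<in> Fo x x \<Longrightarrow> \<phi> x u \<in> Go x x"
    and square: "\<And>f u. f \<in> Ar B \<Longrightarrow> u \<in> Fo (Cod B f) (Dom B f) \<Longrightarrow>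
      Gm f (Idm B (Cod B f)) (\<phi> (Cod B f) (Fm (Idm B (Cod B f)) f u)) =
      Gm (Idm B (Dom B f)) f (\<phi> (Dom B f) (Fm f (Idm B (Dom B f)) u))"
  shows "diag_restrict B Fo \<phi> \<in> dinat B Fo Fm Go Gm"
  unfolding dinat_def using closed square
  by (auto simp: diag_restrict_def cat difunctor_closed[OF F])

text \<open>For \<open>f : c \<rightarrow> d\<close>, the common value \<open>F(d,c) \<rightarrow> G(c,d)\<close> of the two legs of the
  dinaturality hexagon at \<open>f\<close>; at \<open>f = id\<close> it is the component itself.\<close>

definition arrow_component :: "('o, 'm) cat \<Rightarrow> ('m \<Rightarrow> 'm \<Rightarrow> 'v \<Rightarrow> 'v) \<Rightarrow> ('m \<Rightarrow> 'm \<Rightarrow> 'w \<Rightarrow> 'w)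
    \<Rightarrow> ('o \<Rightarrow> 'v \<Rightarrow> 'w) \<Rightarrow> 'm \<Rightarrow> 'v \<Rightarrow> 'w"
  where "arrow_component B Fm Gm \<alpha> f u =
    Gm (Idm B (Dom B f)) f (\<alpha> (Dom B f) (Fm f (Idm B (Dom B f)) u))"

context
  fixes B :: "('o, 'm) cat" and Fo Fm Go Gm \<alpha>
  assumes cat: "category B" and F: "difunctor B Fo Fm" and G: "difunctor B Go Gm"
    and \<alpha>: "\<alpha> \<in> dinat B Fo Fm Go Gm"
begin

lemma arrow_component_closed:
  "f \<in> Ar B \<Longrightarrow> u \<in> Fo (Cod B f) (Dom B f) \<Longrightarrow> arrow_component B Fm Gm \<alpha> f u \<in> Go (Dom B f) (Cod B f)"
  unfolding arrow_component_def
  by (simp add: cat difunctor_closed[OF F] difunctor_closed[OF G] dinat_closed[OF \<alpha>])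

lemma arrow_component_Idm:
  "x \<in> Ob B \<Longrightarrow> u \<in> Fo x x \<Longrightarrow> arrow_component B Fm Gm \<alpha> (Idm B x) u = \<alpha> x u"
  unfolding arrow_component_def
  by (simp add: cat difunctor_Idm[OF F] difunctor_Idm[OF G] dinat_closed[OF \<alpha>])

lemma arrow_component_Comp:
  assumes \<phi>: "\<phi> \<in> Ar B" and \<psi>: "\<psi> \<in> Ar B" and "Cod B \<phi> = Dom B \<psi>" and k: "k \<in> Fo (Cod B \<psi>) (Dom B \<phi>)"
  shows "Gm \<phi> \<psi> (\<alpha> (Cod B \<phi>) (Fm \<psi> \<phi> k)) = arrow_component B Fm Gm \<alpha> (Comp B \<psi> \<phi>) k"
proof -
  define c d where "c = Dom B \<phi>" and "d = Cod B \<phi>"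
  have ob: "c \<in> Ob B" "d \<in> Ob B" and \<psi>d: "Dom B \<psi> = d"
    using assms by (simp_all add: c_def d_def cat)
  define u where "u = Fm \<psi> (Idm B c) k"
  have u: "u \<in> Fo d c"
    unfolding u_def using assms ob \<psi>d by (simp add: cat c_def difunctor_closed[OF F])
  have "Gm \<phi> \<psi> (\<alpha> d (Fm \<psi> \<phi> k)) = Gm (Idm B c) \<psi> (Gm \<phi> (Idm B d) (\<alpha> d (Fm (Idm B d) \<phi> u)))"
    unfolding u_def using assms ob \<psi>d
    by (simp add: cat c_def d_def difunctor_Comp[OF F] difunctor_Comp[OF G] difunctor_closed[OF F]
        dinat_closed[OF \<alpha>])
  also have "\<dots> = Gm (Idm B c) \<psi> (Gm (Idm B c) \<phi> (\<alpha> c (Fm \<phi> (Idm B c) u)))"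
    using dinat_square[OF \<alpha> \<phi>] u by (simp add: c_def d_def)
  also have "\<dots> = Gm (Idm B c) (Comp B \<psi> \<phi>) (\<alpha> c (Fm (Comp B \<psi> \<phi>) (Idm B c) k))"
    unfolding u_def using assms ob \<psi>d u
    by (simp add: cat c_def d_def difunctor_Comp[OF F] difunctor_Comp[OF G] difunctor_closed[OF F] dinat_closed[OF \<alpha>])
  finally show ?thesis
    using assms by (simp add: arrow_component_def cat c_def d_def)
qed

lemma arrow_component_natural:
  assumes \<phi>: "\<phi> \<in> Ar B" and \<psi>: "\<psi> \<in> Ar B" and \<chi>: "\<chi> \<in> Ar B"
    and "Cod B \<phi> = Dom B \<psi>" and "Cod B \<psi> = Dom B \<chi>" and k: "k \<in> Fo (Cod B \<chi>) (Dom B \<phi>)"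
  shows "Gm \<phi> \<chi> (arrow_component B Fm Gm \<alpha> \<psi> (Fm \<chi> \<phi> k)) =
    arrow_component B Fm Gm \<alpha> (Comp B (Comp B \<chi> \<psi>) \<phi>) k"
proof -
  have "Gm \<phi> \<chi> (arrow_component B Fm Gm \<alpha> \<psi> (Fm \<chi> \<phi> k)) =
      Gm \<phi> (Comp B \<chi> \<psi>) (\<alpha> (Cod B \<phi>) (Fm (Comp B \<chi> \<psi>) \<phi> k))"
    unfolding arrow_component_def using assms
    by (simp add: cat difunctor_Comp[OF F] difunctor_Comp[OF G] difunctor_closed[OF F]
        dinat_closed[OF \<alpha>])
  also have "\<dots> = arrow_component B Fm Gm \<alpha> (Comp B (Comp B \<chi> \<psi>) \<phi>) k"
    using arrow_component_Comp[of \<phi> "Comp B \<chi> \<psi>" k] assms by (simp add: cat)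
  finally show ?thesis .
qed

end

lemma arrow_component_whisker:
  assumes cat: "category B" and F: "difunctor B Fo Fm" and F': "difunctor B F'o F'm"
    and \<theta>: "nat_trans B F'o F'm Fo Fm \<theta>" and \<psi>: "nat_trans B Go Gm G'o G'm \<psi>"
    and \<alpha>: "\<alpha> \<in> dinat B Fo Fm Go Gm" and f: "f \<in> Ar B" and u: "u \<in> F'o (Cod B f) (Dom B f)"
  shows "arrow_component B F'm G'm (whisker B F'o \<theta> \<psi> \<alpha>) f u =
    \<psi> (Dom B f) (Cod B f) (arrow_component B Fm Gm \<alpha> f (\<theta> (Cod B f) (Dom B f) u))"
  using f u nat_trans_natural[OF \<theta> f, of "Idm B (Dom B f)" u]
    nat_trans_natural[OF \<psi>, of "Idm B (Dom B f)" f]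
  by (simp add: arrow_component_def whisker_eq_diag_restrict cat difunctor_closed[OF F]
      difunctor_closed[OF F'] dinat_closed[OF \<alpha>] nat_trans_closed[OF \<theta>])

definition hom_extension :: "('a, 'ma) cat \<Rightarrow> ('c, 'mc) cat \<Rightarrow> ('a \<times> 'c \<Rightarrow> 'a \<times> 'c \<Rightarrow> 'v set)
    \<Rightarrow> ('ma \<times> 'mc \<Rightarrow> 'ma \<times> 'mc \<Rightarrow> 'v \<Rightarrow> 'v) \<Rightarrow> ('ma \<times> 'mc \<Rightarrow> 'ma \<times> 'mc \<Rightarrow> 'w \<Rightarrow> 'w)
    \<Rightarrow> ('a \<times> 'c \<Rightarrow> 'v \<Rightarrow> 'w) \<Rightarrow> 'a \<times> ('a \<times> 'c) \<Rightarrow> 'ma \<times> 'v \<Rightarrow> 'w"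
  where "hom_extension A C Go Gm Pm h = diag_restrict (B2 A C) (src2o A Go)
    (\<lambda>(a, b, x) (m, k). arrow_component (B1 A C) Gm Pm h (m, Idm C x) k)"

definition identity_restriction :: "('a, 'ma) cat \<Rightarrow> ('c, 'mc) cat \<Rightarrow> ('a \<times> 'c \<Rightarrow> 'a \<times> 'c \<Rightarrow> 'v set)
    \<Rightarrow> ('a \<times> ('a \<times> 'c) \<Rightarrow> 'ma \<times> 'v \<Rightarrow> 'w) \<Rightarrow> 'a \<times> 'c \<Rightarrow> 'v \<Rightarrow> 'w"
  where "identity_restriction A C Go \<alpha> =
    diag_restrict (B1 A C) Go (\<lambda>(z, x) k. \<alpha> (z, z, x) (Idm A z, k))"

context
  fixes A :: "('a, 'ma) cat" and C :: "('c, 'mc) cat"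
  assumes cA: "category A" and cC: "category C"
begin

lemma hom_extension_dinat:
  assumes G: "difunctor (B1 A C) Go Gm" and P: "difunctor (B1 A C) Po Pm"
    and h: "h \<in> dinat (B1 A C) Go Gm Po Pm"
  shows "hom_extension A C Go Gm Pm h \<in> dinat (B2 A C) (src2o A Go) (src2m A Gm) (tgt2o Po) (tgt2m Pm)"
  unfolding hom_extension_def
proof (rule diag_restrict_dinatI[OF category_prod_cat[OF category_op_cat[OF cA] category_prod_cat[OF cA cC]]
      difunctor_src2[OF cA cC G]], goal_cases)
  case (1 y u)
  then obtain a b x m k where "y = (a, b, x)" "u = (m, k)" "x \<in> Ob C" "m \<in> hom A a b"
    "k \<in> Go (b, x) (a, x)"
    by (cases y; cases u) (auto simp: src2o_def)
  then show ?case
    using arrow_component_closed[OF category_prod_cat[OF cA cC] G P h, of "(m, Idm C x)" k]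
    by (simp add: tgt2o_def cC)
next
  case (2 F u)
  note natural = arrow_component_natural[OF category_prod_cat[OF cA cC] G P h]
  obtain f1 f2 f3 m k where F: "F = (f1, f2, f3)" and u: "u = (m, k)"
    and ar: "f1 \<in> Ar A" "f2 \<in> Ar A" "f3 \<in> Ar C" "m \<in> Ar A" "Dom A m = Cod A f1" "Cod A m = Dom A f2"
    and k: "k \<in> Go (Cod A f2, Cod C f3) (Dom A f1, Dom C f3)"
    using 2 by (cases F; cases u) (auto simp: src2o_def)
  have "Pm (Idm A (Dom A f1), f3) (Idm A (Cod A f2), Idm C (Cod C f3))
      (arrow_component (B1 A C) Gm Pm h (Comp A f2 (Comp A m f1), Idm C (Cod C f3))
        (Gm (Idm A (Cod A f2), Idm C (Cod C f3)) (Idm A (Dom A f1), f3) k)) =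
    arrow_component (B1 A C) Gm Pm h (Comp A f2 (Comp A m f1), f3) k"
    using natural[of "(Idm A (Dom A f1), f3)" "(Comp A f2 (Comp A m f1), Idm C (Cod C f3))"
        "(Idm A (Cod A f2), Idm C (Cod C f3))" k] ar k by (simp add: cA cC)
  moreover have "Pm (f1, Idm C (Dom C f3)) (f2, f3)
      (arrow_component (B1 A C) Gm Pm h (m, Idm C (Dom C f3)) (Gm (f2, f3) (f1, Idm C (Dom C f3)) k)) =
    arrow_component (B1 A C) Gm Pm h (Comp A f2 (Comp A m f1), f3) k"
    using natural[of "(f1, Idm C (Dom C f3))" "(m, Idm C (Dom C f3))" "(f2, f3)" k] ar k
    by (simp add: cA cC Comp_assoc[OF cA])
  ultimately show ?case
    using ar by (simp add: F u src2m_def tgt2m_def cA cC)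
qed

context
  fixes Go Gm Po Pm \<alpha>
  assumes G: "difunctor (B1 A C) Go Gm" and P: "difunctor (B1 A C) Po Pm"
    and \<alpha>: "\<alpha> \<in> dinat (B2 A C) (src2o A Go) (src2m A Gm) (tgt2o Po) (tgt2m Pm)"
begin

lemma dinat_src2_closed:
  "m \<in> Ar A \<Longrightarrow> x \<in> Ob C \<Longrightarrow> k \<in> Go (Cod A m, x) (Dom A m, x) \<Longrightarrow>
   \<alpha> (Dom A m, Cod A m, x) (m, k) \<in> Po (Dom A m, x) (Cod A m, x)"
  using dinat_closed[OF \<alpha>, of "(Dom A m, Cod A m, x)" "(m, k)"] by (simp add: src2o_def tgt2o_def cA)

lemma dinat_src2_square:
  assumes "f1 \<in> Ar A" "f2 \<in> Ar A" "f3 \<in> Ar C" "m \<in> Ar A" "Dom A m = Cod A f1" "Cod A m = Dom A f2"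
    "k \<in> Go (Cod A f2, Cod C f3) (Dom A f1, Dom C f3)"
  shows "Pm (Idm A (Dom A f1), f3) (Idm A (Cod A f2), Idm C (Cod C f3))
      (\<alpha> (Dom A f1, Cod A f2, Cod C f3)
        (Comp A f2 (Comp A m f1), Gm (Idm A (Cod A f2), Idm C (Cod C f3)) (Idm A (Dom A f1), f3) k)) =
    Pm (f1, Idm C (Dom C f3)) (f2, f3)
      (\<alpha> (Cod A f1, Dom A f2, Dom C f3) (m, Gm (f2, f3) (f1, Idm C (Dom C f3)) k))"
  using dinat_square[OF \<alpha>, of "(f1, f2, f3)" "(m, k)"] assms
  by (simp add: src2o_def src2m_def tgt2m_def cA cC)

lemma identity_restriction_dinat:
  "identity_restriction A C Go \<alpha> \<in> dinat (B1 A C) Go Gm Po Pm"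
  unfolding identity_restriction_def
proof (rule diag_restrict_dinatI[OF category_prod_cat[OF cA cC] G], goal_cases)
  case (1 y k)
  then show ?case
    using dinat_src2_closed[of "Idm A (fst y)" "snd y" k] by (cases y) (simp add: cA)
next
  case (2 F u)
  then obtain f g where F: "F = (f, g)" and f: "f \<in> Ar A" and g: "g \<in> Ar C"
    and u: "u \<in> Go (Cod A f, Cod C g) (Dom A f, Dom C g)"
    by (cases F) auto
  txt \<open>Dinaturality at \<open>(f,g)\<close> splits into that of \<open>\<alpha>\<close> at \<open>(f,id,id)\<close>, which moves \<open>f\<close>
    from the contravariant slot into the hom-argument, and at \<open>(id,f,g)\<close>.\<close>
  define a b c d where "a = Dom A f" and "b = Cod A f" and "c = Dom C g" and "d = Cod C g"
  have ob: "a \<in> Ob A" "b \<in> Ob A" "c \<in> Ob C" "d \<in> Ob C"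
    using f g by (simp_all add: a_def b_def c_def d_def cA cC)
  define k where "k = Gm (Idm A b, Idm C d) (Idm A a, g) u"
  have k: "k \<in> Go (b, d) (a, d)"
    unfolding k_def using f g u ob by (simp add: a_def b_def c_def d_def cA cC difunctor_closed[OF G])
  have "Pm (f, g) (Idm A b, Idm C d) (\<alpha> (b, b, d) (Idm A b, Gm (Idm A b, Idm C d) (f, g) u)) =
      Pm (Idm A a, g) (Idm A b, Idm C d)
        (Pm (f, Idm C d) (Idm A b, Idm C d) (\<alpha> (b, b, d) (Idm A b, Gm (Idm A b, Idm C d) (f, Idm C d) k)))"
    unfolding k_def using f g u ob dinat_src2_closed[of "Idm A b" d]
    by (simp add: a_def b_def c_def d_def cA cC difunctor_Comp[OF G] difunctor_Comp[OF P]
        difunctor_closed[OF G])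
  also have "\<dots> = Pm (Idm A a, g) (Idm A b, Idm C d) (\<alpha> (a, b, d) (f, k))"
    using dinat_src2_square[of f "Idm A b" "Idm C d" "Idm A b" k] dinat_src2_closed[of f d k] f k ob
    by (simp add: a_def b_def cA cC difunctor_prod_cat_Idm[OF G] difunctor_prod_cat_Idm[OF P])
  also have "\<dots> = Pm (Idm A a, Idm C c) (f, g) (\<alpha> (a, a, c) (Idm A a, Gm (f, g) (Idm A a, Idm C c) u))"
    using dinat_src2_square[of "Idm A a" f g "Idm A a" u] f g u ob
    by (simp add: a_def b_def c_def d_def k_def cA cC)
  finally show ?case
    using f g u by (simp add: F a_def b_def c_def d_def cA cC difunctor_closed[OF G])
qed

lemma hom_extension_identity_restriction:
  "hom_extension A C Go Gm Pm (identity_restriction A C Go \<alpha>) = \<alpha>"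
proof -
  have "hom_extension A C Go Gm Pm (identity_restriction A C Go \<alpha>) = diag_restrict (B2 A C) (src2o A Go) \<alpha>"
    unfolding hom_extension_def
  proof (rule diag_restrict_cong, goal_cases)
    case (1 y u)
    then obtain a b x m k where "y = (a, b, x)" "u = (m, k)" "a \<in> Ob A" "b \<in> Ob A" "x \<in> Ob C"
      "m \<in> hom A a b" "k \<in> Go (b, x) (a, x)"
      by (cases y; cases u) (auto simp: src2o_def)
    then show ?case
      using dinat_src2_square[of "Idm A a" m "Idm C x" "Idm A a" k] dinat_src2_closed[of m x k]
      by (simp add: arrow_component_def identity_restriction_def cA cC difunctor_closed[OF G]
          difunctor_prod_cat_Idm[OF G] difunctor_prod_cat_Idm[OF P])
  qed
  then show ?thesis
    using diag_restrict_dinat[OF \<alpha>] by simp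
qed

end

context
  fixes Go Gm Po Pm
  assumes G: "difunctor (B1 A C) Go Gm" and P: "difunctor (B1 A C) Po Pm"
begin

lemma hom_extension_Idm:
  assumes h: "h \<in> dinat (B1 A C) Go Gm Po Pm" and "z \<in> Ob A" "x \<in> Ob C" "k \<in> Go (z, x) (z, x)"
  shows "hom_extension A C Go Gm Pm h (z, z, x) (Idm A z, k) = h (z, x) k"
  using arrow_component_Idm[OF category_prod_cat[OF cA cC] G P h, of "(z, x)" k] assms
  by (simp add: hom_extension_def src2o_def cA cC)

lemma identity_restriction_hom_extension:
  assumes h: "h \<in> dinat (B1 A C) Go Gm Po Pm"
  shows "identity_restriction A C Go (hom_extension A C Go Gm Pm h) = h"
proof -
  have "identity_restriction A C Go (hom_extension A C Go Gm Pm h) = diag_restrict (B1 A C) Go h"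
    unfolding identity_restriction_def
    by (rule diag_restrict_cong) (auto simp: hom_extension_Idm[OF h])
  then show ?thesis
    using diag_restrict_dinat[OF h] by simp
qed

lemma hom_extension_bij:
  "bij_betw (hom_extension A C Go Gm Pm) (dinat (B1 A C) Go Gm Po Pm)
     (dinat (B2 A C) (src2o A Go) (src2m A Gm) (tgt2o Po) (tgt2m Pm))"
  by (rule bij_betw_byWitness[where f' = "identity_restriction A C Go"])
    (auto simp: identity_restriction_hom_extension hom_extension_identity_restriction[OF G P]
      hom_extension_dinat[OF G P] identity_restriction_dinat[OF G P])

lemma inv_into_hom_extension:
  assumes "\<alpha> \<in> dinat (B2 A C) (src2o A Go) (src2m A Gm) (tgt2o Po) (tgt2m Pm)"
  shows "inv_into (dinat (B1 A C) Go Gm Po Pm) (hom_extension A C Go Gm Pm) \<alpha> = identity_restriction A C Go \<alpha>"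
  by (rule inv_into_f_eq[OF bij_betw_imp_inj_on[OF hom_extension_bij]])
    (simp_all add: assms identity_restriction_dinat[OF G P] hom_extension_identity_restriction[OF G P])

end

lemma hom_extension_whisker:
  assumes G: "difunctor (B1 A C) Go Gm" and G': "difunctor (B1 A C) G'o G'm"
    and \<theta>: "nat_trans (B1 A C) G'o G'm Go Gm \<theta>" and \<psi>: "nat_trans (B1 A C) Po Pm P'o P'm \<psi>"
    and h: "h \<in> dinat (B1 A C) Go Gm Po Pm"
  shows "hom_extension A C G'o G'm P'm (whisker (B1 A C) G'o \<theta> \<psi> h) =
    whisker (B2 A C) (src2o A G'o) (src2nt \<theta>) (tgt2nt \<psi>) (hom_extension A C Go Gm Pm h)"
  unfolding whisker_eq_diag_restrict[of "B2 A C"] hom_extension_def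
proof (rule diag_restrict_cong, goal_cases)
  case (1 y u)
  then obtain a b x m k where "y = (a, b, x)" "u = (m, k)" "a \<in> Ob A" "b \<in> Ob A" "x \<in> Ob C"
    "m \<in> hom A a b" "k \<in> G'o (b, x) (a, x)"
    by (cases y; cases u) (auto simp: src2o_def)
  then show ?case
    using arrow_component_whisker[OF category_prod_cat[OF cA cC] G G' \<theta> \<psi> h, of "(m, Idm C x)" k]
      nat_trans_closed[OF \<theta>, of "(b, x)" "(a, x)" k]
    by (simp add: src2o_def src2nt_def tgt2nt_def cC)
qed

end

theorem mainTheorem2:
  fixes A :: "('a, 'ma) cat" and C :: "('c, 'mc) cat"
  assumes "category A" and "category C"
  shows "\<exists>J :: ('a \<times> 'c \<Rightarrow> 'a \<times> 'c \<Rightarrow> 'v set) \<Rightarrow> ('ma \<times> 'mc \<Rightarrow> 'ma \<times> 'mc \<Rightarrow> 'v \<Rightarrow> 'v)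
              \<Rightarrow> ('a \<times> 'c \<Rightarrow> 'a \<times> 'c \<Rightarrow> 'w set) \<Rightarrow> ('ma \<times> 'mc \<Rightarrow> 'ma \<times> 'mc \<Rightarrow> 'w \<Rightarrow> 'w)
              \<Rightarrow> ('a \<times> 'c \<Rightarrow> 'v \<Rightarrow> 'w) \<Rightarrow> ('a \<times> ('a \<times> 'c) \<Rightarrow> 'ma \<times> 'v \<Rightarrow> 'w).
    (\<forall>Go Gm Po Pm. difunctor (B1 A C) Go Gm \<longrightarrow> difunctor (B1 A C) Po Pm \<longrightarrow>
       bij_betw (J Go Gm Po Pm) (dinat (B1 A C) Go Gm Po Pm)
                (dinat (B2 A C) (src2o A Go) (src2m A Gm) (tgt2o Po) (tgt2m Pm)) \<and>
       (\<forall>h \<in> dinat (B1 A C) Go Gm Po Pm. \<forall>z \<in> Ob A. \<forall>x \<in> Ob C. \<forall>k \<in> Go (z, x) (z, x).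
          J Go Gm Po Pm h (z, z, x) (Idm A z, k) = h (z, x) k) \<and>
       (\<forall>\<alpha> \<in> dinat (B2 A C) (src2o A Go) (src2m A Gm) (tgt2o Po) (tgt2m Pm).
          inv_into (dinat (B1 A C) Go Gm Po Pm) (J Go Gm Po Pm) \<alpha> =
            (\<lambda>(z, x). if (z, x) \<in> Ob (B1 A C)
               then (\<lambda>k. if k \<in> Go (z, x) (z, x) then \<alpha> (z, z, x) (Idm A z, k) else undefined)
               else (\<lambda>_. undefined)))) \<and>
    (\<forall>Go Gm G'o G'm Po Pm P'o P'm \<theta> \<psi>.
       difunctor (B1 A C) Go Gm \<longrightarrow> difunctor (B1 A C) G'o G'm \<longrightarrow>
       difunctor (B1 A C) Po Pm \<longrightarrow> difunctor (B1 A C) P'o P'm \<longrightarrow>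
       nat_trans (B1 A C) G'o G'm Go Gm \<theta> \<longrightarrow> nat_trans (B1 A C) Po Pm P'o P'm \<psi> \<longrightarrow>
       (\<forall>h \<in> dinat (B1 A C) Go Gm Po Pm.
          J G'o G'm P'o P'm (whisker (B1 A C) G'o \<theta> \<psi> h) =
          whisker (B2 A C) (src2o A G'o) (src2nt \<theta>) (tgt2nt \<psi>) (J Go Gm Po Pm h)))"
proof -
  have identity_restriction_unfold: "identity_restriction A C Go \<alpha> =
      (\<lambda>(z, x). if (z, x) \<in> Ob (B1 A C)
         then (\<lambda>k. if k \<in> Go (z, x) (z, x) then \<alpha> (z, z, x) (Idm A z, k) else undefined)
         else (\<lambda>_. undefined))" for Go and \<alpha> :: "'a \<times> ('a \<times> 'c) \<Rightarrow> 'ma \<times> 'v \<Rightarrow> 'w"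
    by (simp add: identity_restriction_def diag_restrict_def fun_eq_iff split: prod.split)
  show ?thesis
    by (intro exI[of _ "\<lambda>Go Gm Po Pm. hom_extension A C Go Gm Pm"] conjI allI impI ballI)
      (simp_all add: assms hom_extension_bij hom_extension_Idm inv_into_hom_extension
        identity_restriction_unfold hom_extension_whisker)
qed

end
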